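(* Let $s\in\mathbb{Z}$ and let $f$ be any active face of $\square_{\alpha_s}$. Then $g_{\alpha_s}(f)$ is an active face of $\square_{\alpha_{s+1}}$.
   Context: Fix $d\ge1$, $\lambda>0$, $\alpha_s=\lambda2^s$ ($s\in\mathbb{Z}$), and grids $G_{\alpha_s}\subset\mathbb{R}^d$ with $G_{\alpha_0}=\lambda\mathbb{Z}^d$ and $G_{\alpha_{s+1}}=2(G_{\alpha_s}-O_s)+O_s+\frac{\alpha_s}{2}\varepsilon_s$ for some $O_s\in G_{\alpha_s}$, $\varepsilon_s\in\{-1,1\}^d$. $\mathrm{Vor}_G(x)$ is the Voronoi cell of $x$ in grid $G$. $\square_{\alpha_s}$ is the cubical complex of faces $\prod_j[x_j,x_j+m_j]$, $x\in G_{\alpha_s}$, $m_j\in\{0,\alpha_s\}$; a facet of a $k$-face is a $(k-1)$-face contained in it. $g_{\alpha_s}$ maps a vertex $x$ to the unique $y\in G_{\alpha_{s+1}}$ with $x\in\mathrm{Vor}_{G_{\alpha_{s+1}}}(y)$, and a face to the convex hull of the images of its vertices (which is a face of $\square_{\alpha_{s+1}}$). Let $P\subset\mathbb{R}^d$ be finite; $a_{\alpha_s}(p)$ is the grid point of $G_{\alpha_s}$ whose Voronoi cell contains $p$ (assumed unique), and $V_{\alpha_s}:=a_{\alpha_s}(P)$ is the set of active vertices. A face $f$ of $\square_{\alpha_s}$ is spanned by $V\subseteq G_{\alpha_s}$ if $f\cap V$ is non-empty and not contained in any facet of $f$. The active faces of $\square_{\alpha_s}$ are the faces spanned by $V_{\alpha_s}$.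 *)

theory Defs
  imports "HOL-Analysis.Analysis"
begin

definition alpha :: "real \<Rightarrow> int \<Rightarrow> real" where
  "alpha lam s = lam * 2 powi s"

definition grid_family ::
  "real \<Rightarrow> (int \<Rightarrow> (real^'n) set) \<Rightarrow> (int \<Rightarrow> real^'n) \<Rightarrow> (int \<Rightarrow> real^'n) \<Rightarrow> bool" where
  "grid_family lam G Oc eps \<longleftrightarrow>
     G 0 = {x. \<forall>j. \<exists>k::int. x $ j = lam * of_int k} \<and>
     (\<forall>s. Oc s \<in> G s \<and> (\<forall>j. eps s $ j = -1 \<or> eps s $ j = 1) \<and>
          G (s + 1) = (\<lambda>x. 2 *\<^sub>R (x - Oc s) + Oc s + (alpha lam s / 2) *\<^sub>R eps s) ` G s)"

definition vor :: "(real^'n) set \<Rightarrow> real^'n \<Rightarrow> (real^'n) set" where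
  "vor G x = {p. \<forall>y\<in>G. dist p x \<le> dist p y}"

text \<open>The grid point of G whose Voronoi cell contains p (a_alpha(p), and also g on vertices).\<close>
definition nearest :: "(real^'n) set \<Rightarrow> real^'n \<Rightarrow> real^'n" where
  "nearest G p = (THE y. y \<in> G \<and> p \<in> vor G y)"

definition cube_face :: "(real^'n) set \<Rightarrow> real \<Rightarrow> nat \<Rightarrow> (real^'n) set \<Rightarrow> bool" where
  "cube_face G a k f \<longleftrightarrow>
     (\<exists>x\<in>G. \<exists>m::real^'n. (\<forall>j. m $ j = 0 \<or> m $ j = a) \<and> card {j. m $ j = a} = k \<and>
        f = {p. \<forall>j. x $ j \<le> p $ j \<and> p $ j \<le> x $ j + m $ j})"

definition is_face :: "(real^'n) set \<Rightarrow> real \<Rightarrow> (real^'n) set \<Rightarrow> bool" where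
  "is_face G a f \<longleftrightarrow> (\<exists>k. cube_face G a k f)"

definition is_facet :: "(real^'n) set \<Rightarrow> real \<Rightarrow> (real^'n) set \<Rightarrow> (real^'n) set \<Rightarrow> bool" where
  "is_facet G a e f \<longleftrightarrow> (\<exists>k. cube_face G a (Suc k) f \<and> cube_face G a k e \<and> e \<subseteq> f)"

definition spanned :: "(real^'n) set \<Rightarrow> real \<Rightarrow> (real^'n) set \<Rightarrow> (real^'n) set \<Rightarrow> bool" where
  "spanned G a V f \<longleftrightarrow> is_face G a f \<and> f \<inter> V \<noteq> {} \<and> \<not> (\<exists>e. is_facet G a e f \<and> f \<inter> V \<subseteq> e)"

definition active_face ::
  "(real^'n) set \<Rightarrow> real \<Rightarrow> (real^'n) set \<Rightarrow> (real^'n) set \<Rightarrow> bool" where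
  "active_face G a P f \<longleftrightarrow> spanned G a (nearest G ` P) f"

text \<open>g on faces: convex hull of the images of the vertices (f \<inter> G) of f.\<close>
definition gface :: "(real^'n) set \<Rightarrow> (real^'n) set \<Rightarrow> (real^'n) set \<Rightarrow> (real^'n) set" where
  "gface G G' f = convex hull (nearest G' ` (f \<inter> G))"

end

theory Submission
  imports Defs
begin

text \<open>Every grid \<open>G\<^sub>s\<close> is a translate \<open>c + \<alpha>\<^sub>s \<int>\<^sup>d\<close>, and \<open>G\<^sub>s\<^sub>+\<^sub>1\<close> is the translate of
  \<open>2\<alpha>\<^sub>s \<int>\<^sup>d\<close> whose points are offset from those of \<open>G\<^sub>s\<close> by \<open>\<alpha>\<^sub>s/2\<close> in every coordinate.
  Nearest grid points are therefore found by coordinatewise rounding. A vertex of \<open>G\<^sub>s\<close> is at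
  distance exactly \<open>\<alpha>\<^sub>s/2\<close> from its image in each coordinate, so \<open>g\<close> sends \<open>a\<^sub>s(p)\<close> to
  \<open>a\<^sub>s\<^sub>+\<^sub>1(p)\<close> and the vertices of a face \<open>[x, x + m]\<close> onto those of the face \<open>[g x, g (x + m)]\<close>.
  A face is spanned by \<open>V\<close> iff \<open>V\<close> meets it and, in each direction of the face, meets both
  opposite facets; as \<open>g\<close> separates \<open>x\<^sub>j\<close> from \<open>x\<^sub>j + \<alpha>\<^sub>s\<close> whenever the image face extends
  in direction \<open>j\<close>, this property passes from \<open>f\<close> to \<open>g(f)\<close>.\<close>

section \<open>Translated cubic lattices\<close>

definition cubic_lattice :: "real^'n \<Rightarrow> real \<Rightarrow> (real^'n) set" where
  "cubic_lattice c b = {x. \<forall>j. \<exists>k::int. x$j = c$j + b * of_int k}"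

lemma cubic_lattice_componentE:
  assumes "y \<in> cubic_lattice c b"
  obtains k :: int where "y$j = c$j + b * of_int k"
proof -
  from assms have "\<exists>k::int. y$j = c$j + b * of_int k" unfolding cubic_lattice_def by simp
  then show thesis using that by blast
qed

lemma cubic_lattice_eq_of_mem:
  assumes "y \<in> cubic_lattice c b"
  shows "cubic_lattice y b = cubic_lattice c b"
proof -
  have "\<forall>j. \<exists>k::int. y$j = c$j + b * of_int k"
    using assms unfolding cubic_lattice_def by simp
  then obtain k0 where k0: "\<And>j. y$j = c$j + b * of_int (k0 j)"
    by metis
  have "(\<exists>k::int. x$j = y$j + b * of_int k) \<longleftrightarrow> (\<exists>k::int. x$j = c$j + b * of_int k)" for x j
  proof
    assume "\<exists>k::int. x$j = y$j + b * of_int k"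
    then obtain k :: int where "x$j = y$j + b * of_int k" by blast
    then show "\<exists>k::int. x$j = c$j + b * of_int k"
      by (intro exI[of _ "k + k0 j"]) (simp add: k0 algebra_simps)
  next
    assume "\<exists>k::int. x$j = c$j + b * of_int k"
    then obtain k :: int where "x$j = c$j + b * of_int k" by blast
    then show "\<exists>k::int. x$j = y$j + b * of_int k"
      by (intro exI[of _ "k - k0 j"]) (simp add: k0 algebra_simps)
  qed
  then show ?thesis unfolding cubic_lattice_def by blast
qed

lemma affine_image_cubic_lattice:
  fixes r :: real
  assumes "r \<noteq> 0"
  shows "(\<lambda>x. r *\<^sub>R x + t) ` cubic_lattice c b = cubic_lattice (r *\<^sub>R c + t) (r * b)"
proof (intro equalityI subsetI)
  fix y assume "y \<in> (\<lambda>x. r *\<^sub>R x + t) ` cubic_lattice c b"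
  then obtain x where x: "x \<in> cubic_lattice c b" and y: "y = r *\<^sub>R x + t" by blast
  show "y \<in> cubic_lattice (r *\<^sub>R c + t) (r * b)"
    unfolding cubic_lattice_def
  proof (intro CollectI allI)
    fix j
    obtain k :: int where "x$j = c$j + b * of_int k" using x by (rule cubic_lattice_componentE)
    then show "\<exists>k::int. y$j = (r *\<^sub>R c + t)$j + r * b * of_int k"
      by (intro exI[of _ k]) (simp add: y algebra_simps)
  qed
next
  fix y assume "y \<in> cubic_lattice (r *\<^sub>R c + t) (r * b)"
  then have "\<forall>j. \<exists>k::int. y$j = r * c$j + t$j + r * b * of_int k"
    unfolding cubic_lattice_def by simp
  then obtain k where k: "\<And>j. y$j = r * c$j + t$j + r * b * of_int (k j)"
    by metis
  define x where "x = (\<chi> j. c$j + b * of_int (k j))"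
  have "x \<in> cubic_lattice c b" unfolding cubic_lattice_def x_def by auto
  moreover have "y = r *\<^sub>R x + t"
    using assms by (simp add: vec_eq_iff x_def k algebra_simps)
  ultimately show "y \<in> (\<lambda>x. r *\<^sub>R x + t) ` cubic_lattice c b" by blast
qed

lemma cubic_lattice_component_diff_ge:
  assumes "b > 0" "y \<in> cubic_lattice c b" "z \<in> cubic_lattice c b" "y$j \<noteq> z$j"
  shows "b \<le> \<bar>y$j - z$j\<bar>"
proof -
  obtain k k' :: int where "y$j = c$j + b * of_int k" "z$j = c$j + b * of_int k'"
    using assms(2,3) by (meson cubic_lattice_componentE)
  then have "y$j - z$j = b * of_int (k - k')" and "k \<noteq> k'"
    using assms(4) by (auto simp: algebra_simps)
  then have diff: "\<bar>y$j - z$j\<bar> = b * \<bar>of_int (k - k')\<bar>"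
    using assms(1) by (simp add: abs_mult)
  have "1 \<le> \<bar>k - k'\<bar>"
    using \<open>k \<noteq> k'\<close> by linarith
  then have "1 \<le> \<bar>real_of_int (k - k')\<bar>"
    by (metis of_int_1_le_iff of_int_abs)
  then have "b * 1 \<le> b * \<bar>real_of_int (k - k')\<bar>"
    by (rule mult_left_mono) (use assms(1) in simp)
  then show ?thesis
    unfolding diff by simp
qed

lemma cubic_lattice_component_step:
  assumes "b > 0" "y \<in> cubic_lattice c b" "z \<in> cubic_lattice c b"
    and "y$j \<le> z$j" "z$j \<le> y$j + b"
  shows "z$j = y$j \<or> z$j = y$j + b"
  using cubic_lattice_component_diff_ge[OF assms(1-3), of j] assms(4,5) by fastforce

lemma cubic_lattice_adjacent_mem:
  assumes "x \<in> cubic_lattice c b" "\<And>j. v$j = x$j \<or> v$j = x$j + b"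
  shows "v \<in> cubic_lattice c b"
  unfolding cubic_lattice_def
proof (intro CollectI allI)
  fix j
  obtain k :: int where k: "x$j = c$j + b * of_int k"
    using assms(1) by (rule cubic_lattice_componentE)
  show "\<exists>k::int. v$j = c$j + b * of_int k"
    using assms(2)[of j]
  proof
    assume "v$j = x$j" then show ?thesis using k by (intro exI[of _ k]) simp
  next
    assume "v$j = x$j + b" then show ?thesis
      using k by (intro exI[of _ "k + 1"]) (simp add: algebra_simps)
  qed
qed

section \<open>Voronoi cells and rounding\<close>

lemma nearest_mem:
  assumes "\<exists>!y. y \<in> G \<and> p \<in> vor G y"
  shows "nearest G p \<in> G"
  using theI'[OF assms] unfolding nearest_def by blast

lemma dist_le_of_components_le:
  fixes p y z :: "real^'n"
  assumes "\<And>j. \<bar>p$j - y$j\<bar> \<le> \<bar>p$j - z$j\<bar>"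
  shows "dist p y \<le> dist p z"
  unfolding dist_vec_def dist_real_def by (rule L2_set_mono) (use assms in auto)

lemma dist_less_of_components_le_less:
  fixes p y z :: "real^'n"
  assumes "\<And>j. \<bar>p$j - y$j\<bar> \<le> \<bar>p$j - z$j\<bar>" "\<bar>p$i - y$i\<bar> < \<bar>p$i - z$i\<bar>"
  shows "dist p y < dist p z"
  unfolding dist_vec_def dist_real_def L2_set_def
proof (rule real_sqrt_less_mono, rule sum_strict_mono_ex1)
  show "\<forall>j\<in>UNIV. \<bar>p$j - y$j\<bar>\<^sup>2 \<le> \<bar>p$j - z$j\<bar>\<^sup>2"
    using assms(1) by (metis abs_ge_zero power_mono)
  show "\<exists>j\<in>UNIV. \<bar>p$j - y$j\<bar>\<^sup>2 < \<bar>p$j - z$j\<bar>\<^sup>2"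
    using assms(2) by (intro bexI[of _ i] power_strict_mono) auto
qed simp

lemma mem_vor_cubic_lattice:
  assumes "b > 0" "y \<in> cubic_lattice c b" "\<And>j. \<bar>p$j - y$j\<bar> \<le> b/2"
  shows "p \<in> vor (cubic_lattice c b) y"
  unfolding vor_def
proof (intro CollectI ballI dist_le_of_components_le)
  fix z j assume "z \<in> cubic_lattice c b"
  then have "y$j \<noteq> z$j \<Longrightarrow> b \<le> \<bar>y$j - z$j\<bar>"
    using assms(1,2) by (simp add: cubic_lattice_component_diff_ge)
  then show "\<bar>p$j - y$j\<bar> \<le> \<bar>p$j - z$j\<bar>"
    using assms(3)[of j] by (cases "y$j = z$j") linarith+
qed

lemma nearest_cubic_lattice_eqI:
  assumes "b > 0" "y \<in> cubic_lattice c b" "\<And>j. \<bar>p$j - y$j\<bar> < b/2"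
  shows "nearest (cubic_lattice c b) p = y"
  unfolding nearest_def
proof (rule the_equality)
  show "y \<in> cubic_lattice c b \<and> p \<in> vor (cubic_lattice c b) y"
    using assms by (simp add: mem_vor_cubic_lattice less_imp_le)
next
  fix z assume z: "z \<in> cubic_lattice c b \<and> p \<in> vor (cubic_lattice c b) z"
  show "z = y"
  proof (rule ccontr)
    assume "z \<noteq> y"
    then obtain i where "y$i \<noteq> z$i" by (metis vec_eq_iff)
    have closer: "y$j \<noteq> z$j \<Longrightarrow> \<bar>p$j - y$j\<bar> < \<bar>p$j - z$j\<bar>" for j
      using cubic_lattice_component_diff_ge[OF assms(1,2), of z j] z assms(3)[of j] by linarith
    then have not_farther: "\<bar>p$j - y$j\<bar> \<le> \<bar>p$j - z$j\<bar>" for j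
      by (cases "y$j = z$j") (simp_all add: less_imp_le)
    have "dist p y < dist p z"
      by (rule dist_less_of_components_le_less[OF not_farther closer[OF \<open>y$i \<noteq> z$i\<close>]])
    moreover have "dist p z \<le> dist p y"
      using z assms(2) unfolding vor_def by blast
    ultimately show False by simp
  qed
qed

definition lattice_round :: "real^'n \<Rightarrow> real \<Rightarrow> real^'n \<Rightarrow> real^'n" where
  "lattice_round c b p = (\<chi> j. c$j + b * of_int (round ((p$j - c$j) / b)))"

lemma lattice_round_mem: "lattice_round c b p \<in> cubic_lattice c b"
  unfolding lattice_round_def cubic_lattice_def by auto

lemma lattice_round_component_cong: "p$j = q$j \<Longrightarrow> lattice_round c b p $ j = lattice_round c b q $ j"
  by (simp add: lattice_round_def)

lemma lattice_round_component_dist: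
  assumes "b > 0"
  shows "\<bar>p$j - lattice_round c b p $ j\<bar> \<le> b/2"
proof -
  define t where "t = (p$j - c$j) / b"
  have "p$j - c$j = b * t"
    using assms by (simp add: t_def)
  then have "p$j - lattice_round c b p $ j = b * (t - of_int (round t))"
    by (simp add: lattice_round_def t_def algebra_simps)
  then have "\<bar>p$j - lattice_round c b p $ j\<bar> = b * \<bar>of_int (round t) - t\<bar>"
    using assms by (simp add: abs_mult abs_minus_commute)
  also have "\<dots> \<le> b * (1/2)"
    using assms of_int_round_abs_le[of t] by (intro mult_left_mono) auto
  finally show ?thesis by simp
qed

lemma nearest_cubic_lattice_eq_round:
  assumes "b > 0" "\<exists>!y. y \<in> cubic_lattice c b \<and> p \<in> vor (cubic_lattice c b) y"
  shows "nearest (cubic_lattice c b) p = lattice_round c b p"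
  unfolding nearest_def
  by (rule the1_equality[OF assms(2)])
    (intro conjI lattice_round_mem mem_vor_cubic_lattice assms(1) lattice_round_component_dist)

section \<open>Faces of the cubical complex\<close>

lemma convex_hull_cbox_vertices:
  fixes l u :: "'a::euclidean_space"
  assumes "\<And>i. i \<in> Basis \<Longrightarrow> l \<bullet> i \<le> u \<bullet> i"
  shows "convex hull {x. \<forall>i\<in>Basis. x \<bullet> i = l \<bullet> i \<or> x \<bullet> i = u \<bullet> i} = cbox l u"
proof -
  have "cbox l u = {x. \<forall>i\<in>Basis. x \<bullet> i \<in> cbox (l \<bullet> i) (u \<bullet> i)}"
    by (auto simp: cbox_def)
  also have "\<dots> = (\<Sum>i\<in>Basis. (\<lambda>x. x *\<^sub>R i) ` cbox (l \<bullet> i) (u \<bullet> i))"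
    by (simp only: box_eq_set_sum_Basis)
  also have "\<dots> = (\<Sum>i\<in>Basis. (\<lambda>x. x *\<^sub>R i) ` (convex hull {l \<bullet> i, u \<bullet> i}))"
    using assms by (intro sum.cong refl) (simp add: convex_hull_eq_real_cbox)
  also have "\<dots> = (\<Sum>i\<in>Basis. convex hull ((\<lambda>x. x *\<^sub>R i) ` {l \<bullet> i, u \<bullet> i}))"
    by (simp add: convex_hull_linear_image)
  also have "\<dots> = convex hull (\<Sum>i\<in>Basis. (\<lambda>x. x *\<^sub>R i) ` {l \<bullet> i, u \<bullet> i})"
    by (simp only: convex_hull_set_sum)
  also have "\<dots> = convex hull {x. \<forall>i\<in>Basis. x \<bullet> i \<in> {l \<bullet> i, u \<bullet> i}}"
    by (simp only: box_eq_set_sum_Basis)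
  finally show ?thesis by simp
qed

lemma convex_hull_cbox_vertices_cart:
  fixes l u :: "real^'n"
  assumes "\<And>j. l$j \<le> u$j"
  shows "convex hull {x. \<forall>j. x$j = l$j \<or> x$j = u$j} = cbox l u"
proof -
  have "{x. \<forall>j. x$j = l$j \<or> x$j = u$j} =
      {x. \<forall>i\<in>Basis. x \<bullet> i = l \<bullet> i \<or> x \<bullet> i = u \<bullet> i}"
    by (auto simp: Basis_vec_def inner_axis)
  moreover have "\<And>i. i \<in> Basis \<Longrightarrow> l \<bullet> i \<le> u \<bullet> i"
    using assms by (auto simp: Basis_vec_def inner_axis)
  ultimately show ?thesis
    by (simp only: convex_hull_cbox_vertices)
qed

lemma cube_face_iff_cbox:
  "cube_face G b k f \<longleftrightarrow>
     (\<exists>x\<in>G. \<exists>m. (\<forall>j. m$j = 0 \<or> m$j = b) \<and> card {j. m$j = b} = k \<and> f = cbox x (x + m))"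
proof -
  have eq: "{p. \<forall>j. x$j \<le> p$j \<and> p$j \<le> x$j + m$j} = cbox x (x + m)" for x m :: "real^'n"
    by (auto simp: mem_box_cart)
  show ?thesis
    by (simp only: cube_face_def eq)
qed

lemma cube_face_vertex_component:
  assumes "b > 0" "x \<in> cubic_lattice c b" "\<forall>j. m$j = 0 \<or> m$j = b"
    and "v \<in> cbox x (x + m)" "v \<in> cubic_lattice c b"
  shows "v$j = x$j \<or> v$j = x$j + m$j"
proof -
  have "x$j \<le> v$j" "v$j \<le> x$j + m$j"
    using assms(4) by (auto simp: mem_box_cart)
  moreover have "m$j \<le> b"
    using assms(1,3) by (metis order.refl less_imp_le)
  ultimately have "v$j = x$j \<or> v$j = x$j + b"
    using cubic_lattice_component_step[OF assms(1,2,5)] by simp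
  then show ?thesis
    using \<open>v$j \<le> x$j + m$j\<close> assms(1,3) by force
qed

lemma spanned_cbox_sides:
  assumes "b > 0" "x \<in> cubic_lattice c b" "\<forall>j. m$j = 0 \<or> m$j = b" "V \<subseteq> cubic_lattice c b"
    and "spanned (cubic_lattice c b) b V (cbox x (x + m))" "m$j = b"
  shows "\<exists>v\<in>cbox x (x + m) \<inter> V. \<exists>w\<in>cbox x (x + m) \<inter> V. v$j \<noteq> w$j"
proof (rule ccontr)
  let ?f = "cbox x (x + m)"
  assume "\<not> ?thesis"
  then have same: "v$j = w$j" if "v \<in> ?f \<inter> V" "w \<in> ?f \<inter> V" for v w
    using that by blast
  obtain v0 where v0: "v0 \<in> ?f \<inter> V"
    using assms(5) unfolding spanned_def by blast
  define x' where "x' = (\<chi> i. if i = j then v0$j else x$i)"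
  define m' where "m' = (\<chi> i. if i = j then 0 else m$i)"
  have "v0$j = x$j \<or> v0$j = x$j + b"
    using cube_face_vertex_component[OF assms(1,2,3)] v0 assms(4,6)
    by fastforce
  then have "x' \<in> cubic_lattice c b"
    unfolding x'_def
    by (intro cubic_lattice_adjacent_mem[OF assms(2)]) auto
  have m'_vals: "\<forall>i. m'$i = 0 \<or> m'$i = b"
    using assms(3) by (simp add: m'_def)
  have m'_set: "{i. m'$i = b} = {i. m$i = b} - {j}"
    using assms(1) by (auto simp: m'_def)
  have "j \<in> {i. m$i = b}"
    using assms(6) by simp
  then have card_m: "card {i. m$i = b} = Suc (card {i. m'$i = b})"
    unfolding m'_set by (intro card_Suc_Diff1[symmetric]) auto
  have "cube_face (cubic_lattice c b) b (Suc (card {i. m'$i = b})) ?f"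
    unfolding cube_face_iff_cbox using assms(2,3) card_m by blast
  moreover have "cube_face (cubic_lattice c b) b (card {i. m'$i = b}) (cbox x' (x' + m'))"
    unfolding cube_face_iff_cbox using \<open>x' \<in> cubic_lattice c b\<close> m'_vals by blast
  moreover have "cbox x' (x' + m') \<subseteq> ?f"
  proof
    fix p assume "p \<in> cbox x' (x' + m')"
    then have p: "x'$i \<le> p$i \<and> p$i \<le> x'$i + m'$i" for i
      by (simp add: mem_box_cart)
    have v0j: "x$j \<le> v0$j \<and> v0$j \<le> x$j + m$j"
      using v0 by (simp add: mem_box_cart)
    show "p \<in> ?f"
      unfolding mem_box_cart vector_add_component
    proof
      fix i
      show "x$i \<le> p$i \<and> p$i \<le> x$i + m$i"
        using p[of i] v0j by (cases "i = j") (auto simp: x'_def m'_def)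
    qed
  qed
  moreover have "?f \<inter> V \<subseteq> cbox x' (x' + m')"
    using same[OF _ v0] by (auto simp: mem_box_cart x'_def m'_def)
  ultimately show False
    using assms(5) unfolding spanned_def is_facet_def by blast
qed

lemma spanned_cboxI:
  assumes "b > 0" "x \<in> cubic_lattice c b" "\<forall>j. m$j = 0 \<or> m$j = b" "cbox x (x + m) \<inter> V \<noteq> {}"
    and sides: "\<And>j. m$j = b \<Longrightarrow> \<exists>v\<in>cbox x (x + m) \<inter> V. \<exists>w\<in>cbox x (x + m) \<inter> V. v$j \<noteq> w$j"
  shows "spanned (cubic_lattice c b) b V (cbox x (x + m))"
  unfolding spanned_def
proof (intro conjI)
  let ?f = "cbox x (x + m)"
  show "is_face (cubic_lattice c b) b ?f"
    unfolding is_face_def cube_face_iff_cbox using assms(2,3) by blast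
  show "?f \<inter> V \<noteq> {}" by fact
  show "\<not> (\<exists>e. is_facet (cubic_lattice c b) b e ?f \<and> ?f \<inter> V \<subseteq> e)"
  proof
    assume "\<exists>e. is_facet (cubic_lattice c b) b e ?f \<and> ?f \<inter> V \<subseteq> e"
    then obtain e k where f: "cube_face (cubic_lattice c b) b (Suc k) ?f" and e: "cube_face (cubic_lattice c b) b k e"
      and covered: "?f \<inter> V \<subseteq> e"
      unfolding is_facet_def by blast
    obtain x' m' where m': "\<forall>j. m'$j = 0 \<or> m'$j = b" "card {j. m'$j = b} = Suc k"
      and f_eq: "?f = cbox x' (x' + m')"
      using f unfolding cube_face_iff_cbox by blast
    obtain y n where n: "\<forall>j. n$j = 0 \<or> n$j = b" "card {j. n$j = b} = k"
      and e_eq: "e = cbox y (y + n)"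
      using e unfolding cube_face_iff_cbox by blast
    have "0 \<le> m$i" for i
      using assms(1,3) by (metis less_imp_le order.refl)
    then have "x \<in> ?f"
      by (simp add: mem_box_cart)
    then have "m' = m"
      using f_eq by (auto simp: eq_cbox)
    then have "\<not> {j. m$j = b} \<subseteq> {j. n$j = b}"
      using m'(2) n(2) card_mono[of "{j. n$j = b}" "{j. m$j = b}"] by auto
    then obtain j where "m$j = b" "n$j = 0"
      using n(1) by blast
    then obtain v w where "v \<in> e" "w \<in> e" "v$j \<noteq> w$j"
      using sides covered by blast
    moreover have "u$j = y$j" if "u \<in> e" for u
      using that \<open>n$j = 0\<close> unfolding e_eq mem_box_cart vector_add_component
      by (metis add.right_neutral order_antisym)
    ultimately show False
      by simp
  qed
qed

section \<open>The grid family\<close>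

lemma alpha_succ: "alpha lam (s + 1) = 2 * alpha lam s"
  unfolding alpha_def by (simp add: power_int_add)

lemma alpha_pos: "lam > 0 \<Longrightarrow> alpha lam s > 0"
  unfolding alpha_def by simp

lemma double_about_point_eq:
  fixes o' h :: "real^'n"
  shows "(\<lambda>x. 2 *\<^sub>R (x - o') + o' + h) = (\<lambda>x. 2 *\<^sub>R x + (h - o'))"
  by (simp add: fun_eq_iff scaleR_2 algebra_simps)

lemma grid_family_cubic_lattice:
  fixes G :: "int \<Rightarrow> (real^'n) set"
  assumes "lam > 0" "grid_family lam G Oc eps"
  shows "G s = cubic_lattice (Oc s) (alpha lam s)"
proof -
  let ?t = "\<lambda>i. (alpha lam i / 2) *\<^sub>R eps i - Oc i"
  have step: "G (i + 1) = (\<lambda>x. 2 *\<^sub>R x + ?t i) ` G i" for i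
    using assms(2) unfolding grid_family_def double_about_point_eq by blast
  have "\<exists>c. G s = cubic_lattice c (alpha lam s)"
  proof (induction s rule: int_induct[where k = 0])
    case base
    have "G 0 = cubic_lattice 0 (alpha lam 0)"
      using assms(2) by (simp add: grid_family_def cubic_lattice_def alpha_def mult.commute)
    then show ?case by blast
  next
    case (step1 i)
    then obtain c where "G i = cubic_lattice c (alpha lam i)" by blast
    then have "G (i + 1) = cubic_lattice (2 *\<^sub>R c + ?t i) (alpha lam (i + 1))"
      by (simp add: step affine_image_cubic_lattice alpha_succ)
    then show ?case by blast
  next
    case (step2 i)
    then obtain c where c: "G i = cubic_lattice c (alpha lam i)" by blast
    let ?\<phi> = "\<lambda>x::real^'n. 2 *\<^sub>R x + ?t (i - 1)"
    let ?c' = "(1/2) *\<^sub>R (c - ?t (i - 1))"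
    have "?\<phi> ` G (i - 1) = ?\<phi> ` cubic_lattice ?c' (alpha lam (i - 1))"
      using step[of "i - 1"] c alpha_succ[of lam "i - 1"] by (simp add: affine_image_cubic_lattice)
    moreover have "inj ?\<phi>"
      by (rule injI) simp
    ultimately have "G (i - 1) = cubic_lattice ?c' (alpha lam (i - 1))"
      by (simp add: inj_image_eq_iff)
    then show ?case by blast
  qed
  then obtain c where "G s = cubic_lattice c (alpha lam s)" by blast
  moreover have "Oc s \<in> G s"
    using assms(2) unfolding grid_family_def by blast
  ultimately show ?thesis
    by (simp add: cubic_lattice_eq_of_mem)
qed

lemma grid_family_succ_cubic_lattice:
  fixes G :: "int \<Rightarrow> (real^'n) set"
  assumes "lam > 0" "grid_family lam G Oc eps"
  shows "G (s + 1) = cubic_lattice (Oc s + (alpha lam s / 2) *\<^sub>R eps s) (2 * alpha lam s)"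
proof -
  let ?t = "(alpha lam s / 2) *\<^sub>R eps s - Oc s"
  have "G (s + 1) = (\<lambda>x. 2 *\<^sub>R x + ?t) ` G s"
    using assms(2) unfolding grid_family_def double_about_point_eq by blast
  also have "\<dots> = cubic_lattice (2 *\<^sub>R Oc s + ?t) (2 * alpha lam s)"
    unfolding grid_family_cubic_lattice[OF assms] by (simp add: affine_image_cubic_lattice)
  also have "2 *\<^sub>R Oc s + ?t = Oc s + (alpha lam s / 2) *\<^sub>R eps s"
    by (simp add: scaleR_2 algebra_simps)
  finally show ?thesis .
qed

section \<open>One refinement step\<close>

text \<open>In the notation of the paper, \<open>fine_grid\<close> is \<open>G\<^sub>s\<close>, \<open>coarse_grid\<close> is \<open>G\<^sub>s\<^sub>+\<^sub>1\<close>, and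
  \<open>snap\<close> is the vertex map \<open>g\<close> (see \<open>nearest_coarse_vertex\<close>).\<close>

locale grid_refinement =
  fixes c e :: "real^'n" and a :: real
  assumes spacing_pos: "a > 0" and signs: "\<And>j. e$j = 1 \<or> e$j = -1"
begin

abbreviation fine_grid :: "(real^'n) set" where
  "fine_grid \<equiv> cubic_lattice c a"

abbreviation coarse_grid :: "(real^'n) set" where
  "coarse_grid \<equiv> cubic_lattice (c + (a/2) *\<^sub>R e) (2 * a)"

abbreviation snap :: "real^'n \<Rightarrow> real^'n" where
  "snap \<equiv> lattice_round (c + (a/2) *\<^sub>R e) (2 * a)"

lemma snap_component_dist:
  assumes "v \<in> fine_grid"
  shows "\<bar>v$j - snap v $ j\<bar> = a/2"
proof -
  obtain k :: int where k: "v$j = c$j + a * of_int k"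
    using assms by (rule cubic_lattice_componentE)
  obtain q :: int where "snap v $ j = (c + (a/2) *\<^sub>R e)$j + 2 * a * of_int q"
    using lattice_round_mem by (rule cubic_lattice_componentE)
  then have q: "snap v $ j = c$j + a/2 * e$j + 2 * a * of_int q"
    by simp
  \<comment> \<open>\<open>v\<^sub>j - snap v\<^sub>j\<close> is an odd multiple of \<open>a/2\<close> and at most \<open>a\<close> in size.\<close>
  define t where "t = of_int (k - 2 * q) - e$j / 2"
  have diff: "v$j - snap v $ j = a * t"
    unfolding k q t_def by (simp add: algebra_simps)
  have "\<bar>v$j - snap v $ j\<bar> \<le> 2 * a / 2"
    using spacing_pos by (intro lattice_round_component_dist) simp
  then have "a * \<bar>t\<bar> \<le> a * 1"
    unfolding diff using spacing_pos by (simp add: abs_mult)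
  then have "\<bar>t\<bar> \<le> 1"
    using spacing_pos by simp
  then have "(- 2::real) < of_int (k - 2 * q)" "of_int (k - 2 * q) < (2::real)"
    using signs[of j] unfolding t_def by auto
  then have "k - 2 * q \<in> {-1, 0, 1}"
    by auto
  then have "\<bar>t\<bar> = 1/2"
    using \<open>\<bar>t\<bar> \<le> 1\<close> signs[of j] unfolding t_def by auto
  then show ?thesis
    unfolding diff using spacing_pos by (simp add: abs_mult)
qed

lemma nearest_coarse_vertex:
  assumes "v \<in> fine_grid"
  shows "nearest coarse_grid v = snap v"
proof (intro nearest_cubic_lattice_eqI lattice_round_mem)
  show "\<bar>v$j - snap v $ j\<bar> < 2 * a / 2" for j
    using snap_component_dist[OF assms, of j] spacing_pos by simp
qed (use spacing_pos in simp)

lemma nearest_coarse_eq_snap_nearest_fine: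
  assumes "\<exists>!y. y \<in> fine_grid \<and> p \<in> vor fine_grid y"
    and "\<exists>!y. y \<in> coarse_grid \<and> p \<in> vor coarse_grid y"
  shows "nearest coarse_grid p = snap (nearest fine_grid p)"
proof -
  define y where "y = nearest fine_grid p"
  have "y = lattice_round c a p"
    unfolding y_def using spacing_pos assms(1) by (rule nearest_cubic_lattice_eq_round)
  then have p_close: "\<bar>p$j - y$j\<bar> \<le> a/2" and "y \<in> fine_grid" for j
    using lattice_round_component_dist[OF spacing_pos] lattice_round_mem by simp_all
  then have "\<bar>p$j - snap y $ j\<bar> \<le> 2 * a / 2" for j
    using snap_component_dist[of y j] p_close[of j] by linarith
  then have "p \<in> vor coarse_grid (snap y)"
    using spacing_pos by (intro mem_vor_cubic_lattice lattice_round_mem) auto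
  then show ?thesis
    unfolding y_def[symmetric] nearest_def[of coarse_grid]
    by (intro the1_equality[OF assms(2)] conjI lattice_round_mem)
qed

lemma snap_cube_face_corner:
  assumes "x \<in> fine_grid" "\<forall>j. m$j = 0 \<or> m$j = a"
  shows "snap (x + m) $ j = snap x $ j \<or> (m$j = a \<and> snap (x + m) $ j = snap x $ j + 2 * a)"
proof (cases "m$j = 0")
  case True
  then have "snap (x + m) $ j = snap x $ j"
    by (intro lattice_round_component_cong) simp
  then show ?thesis ..
next
  case False
  then have mj: "m$j = a"
    using assms(2) by blast
  have "x + m \<in> fine_grid"
    using assms by (intro cubic_lattice_adjacent_mem[OF assms(1)]) auto
  then have "\<bar>x$j + a - snap (x + m) $ j\<bar> = a/2"
    using snap_component_dist[of "x + m" j] mj by simp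
  moreover have "\<bar>x$j - snap x $ j\<bar> = a/2"
    using snap_component_dist[OF assms(1)] .
  ultimately have "snap x $ j \<le> snap (x + m) $ j" "snap (x + m) $ j \<le> snap x $ j + 2 * a"
    by linarith+
  then have "snap (x + m) $ j = snap x $ j \<or> snap (x + m) $ j = snap x $ j + 2 * a"
    using spacing_pos
    by (intro cubic_lattice_component_step[where c = "c + (a/2) *\<^sub>R e"] lattice_round_mem) auto
  then show ?thesis
    using mj by blast
qed

lemma snap_cube_face_vertices:
  assumes "x \<in> fine_grid" "\<forall>j. m$j = 0 \<or> m$j = a"
  shows "nearest coarse_grid ` (cbox x (x + m) \<inter> fine_grid) =
    {w. \<forall>j. w$j = snap x $ j \<or> w$j = snap (x + m) $ j}"
proof (intro equalityI subsetI)
  fix w assume "w \<in> nearest coarse_grid ` (cbox x (x + m) \<inter> fine_grid)"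
  then obtain v where v: "v \<in> cbox x (x + m)" "v \<in> fine_grid" and w: "w = snap v"
    using nearest_coarse_vertex by auto
  have "v$j = x$j \<or> v$j = (x + m)$j" for j
    using cube_face_vertex_component[OF spacing_pos assms v] by simp
  then show "w \<in> {w. \<forall>j. w$j = snap x $ j \<or> w$j = snap (x + m) $ j}"
    unfolding w using lattice_round_component_cong by blast
next
  fix w assume w: "w \<in> {w. \<forall>j. w$j = snap x $ j \<or> w$j = snap (x + m) $ j}"
  define v where "v = (\<chi> j. if w$j = snap x $ j then x$j else x$j + m$j)"
  have "0 \<le> m$j" for j
    using assms(2) spacing_pos by (metis less_imp_le order.refl)
  then have "v \<in> cbox x (x + m)"
    by (simp add: v_def mem_box_cart)
  moreover have "v \<in> fine_grid"
    using assms by (intro cubic_lattice_adjacent_mem[OF assms(1)]) (auto simp: v_def)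
  moreover have "snap v $ j = w$j" for j
  proof (cases "w$j = snap x $ j")
    case True
    then have "snap v $ j = snap x $ j"
      by (intro lattice_round_component_cong) (simp add: v_def)
    then show ?thesis
      using True by simp
  next
    case False
    then have "snap v $ j = snap (x + m) $ j"
      by (intro lattice_round_component_cong) (simp add: v_def)
    then show ?thesis
      using False w by auto
  qed
  then have "snap v = w"
    by (simp add: vec_eq_iff)
  ultimately show "w \<in> nearest coarse_grid ` (cbox x (x + m) \<inter> fine_grid)"
    using nearest_coarse_vertex by (metis IntI image_eqI)
qed

lemma gface_cube_face:
  assumes "x \<in> fine_grid" "\<forall>j. m$j = 0 \<or> m$j = a"
  shows "gface fine_grid coarse_grid (cbox x (x + m)) = cbox (snap x) (snap (x + m))"
proof -
  have "snap x $ j \<le> snap (x + m) $ j" for j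
    using snap_cube_face_corner[OF assms, of j] spacing_pos by auto
  then show ?thesis
    unfolding gface_def snap_cube_face_vertices[OF assms] by (rule convex_hull_cbox_vertices_cart)
qed

lemma spanned_gface:
  assumes "V \<subseteq> fine_grid" "spanned fine_grid a V f"
  shows "spanned coarse_grid (2 * a) (snap ` V) (gface fine_grid coarse_grid f)"
proof -
  obtain x m where x: "x \<in> fine_grid" and m: "\<forall>j. m$j = 0 \<or> m$j = a"
    and f: "f = cbox x (x + m)"
    using assms(2) unfolding spanned_def is_face_def cube_face_iff_cbox by blast
  define d where "d = snap (x + m) - snap x"
  have d: "d$j = 0 \<or> d$j = 2 * a" for j
    using snap_cube_face_corner[OF x m, of j] by (auto simp: d_def)
  have image: "gface fine_grid coarse_grid f = cbox (snap x) (snap x + d)"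
    unfolding f gface_cube_face[OF x m] d_def by simp
  have snap_mem: "snap v \<in> gface fine_grid coarse_grid f \<inter> snap ` V" if "v \<in> f \<inter> V" for v
  proof -
    have "v \<in> f \<inter> fine_grid"
      using that assms(1) by blast
    then have "snap v \<in> nearest coarse_grid ` (f \<inter> fine_grid)"
      using nearest_coarse_vertex by (metis IntD2 image_eqI)
    then show ?thesis
      using that unfolding gface_def by (blast intro: hull_inc)
  qed
  show ?thesis
    unfolding image
  proof (rule spanned_cboxI)
    show "0 < 2 * a" "snap x \<in> coarse_grid" "\<forall>j. d$j = 0 \<or> d$j = 2 * a"
      using spacing_pos d by (simp_all add: lattice_round_mem)
    show "cbox (snap x) (snap x + d) \<inter> snap ` V \<noteq> {}"
      using assms(2) snap_mem unfolding spanned_def image by blast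
  next
    fix j assume "d$j = 2 * a"
    then have "snap x $ j \<noteq> snap (x + m) $ j" and "m$j = a"
      using spacing_pos snap_cube_face_corner[OF x m, of j] by (auto simp: d_def)
    obtain v w where vw: "v \<in> f \<inter> V" "w \<in> f \<inter> V" "v$j \<noteq> w$j"
      using spanned_cbox_sides[OF spacing_pos x m assms(1) assms(2)[unfolded f] \<open>m$j = a\<close>]
      unfolding f by blast
    have "u$j = x$j \<or> u$j = (x + m)$j" if "u \<in> f \<inter> V" for u
      using cube_face_vertex_component[OF spacing_pos x m] that assms(1) unfolding f by auto
    then have "snap v $ j \<noteq> snap w $ j"
      using vw \<open>snap x $ j \<noteq> snap (x + m) $ j\<close> lattice_round_component_cong by metis
    then show "\<exists>v\<in>cbox (snap x) (snap x + d) \<inter> snap ` V. \<exists>w\<in>cbox (snap x) (snap x + d) \<inter> snap ` V.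
        v$j \<noteq> w$j"
      using snap_mem[OF vw(1)] snap_mem[OF vw(2)] unfolding image by blast
  qed
qed

end

theorem lemma7:
  fixes lam :: real and G :: "int \<Rightarrow> (real^'n) set" and Oc eps :: "int \<Rightarrow> real^'n"
    and P f :: "(real^'n) set" and s :: int
  assumes "lam > 0"
    and "grid_family lam G Oc eps"
    and "finite P"
    and "\<forall>t. \<forall>p\<in>P. \<exists>!y. y \<in> G t \<and> p \<in> vor (G t) y"
    and "active_face (G s) (alpha lam s) P f"
  shows "active_face (G (s + 1)) (alpha lam (s + 1)) P (gface (G s) (G (s + 1)) f)"
proof -
  define a where "a = alpha lam s"
  interpret grid_refinement "Oc s" "eps s" a
    using assms(1,2) alpha_pos unfolding grid_family_def a_def by unfold_locales blast+
  have fine: "G s = fine_grid" and coarse: "G (s + 1) = coarse_grid"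
    using grid_family_cubic_lattice[OF assms(1,2)] grid_family_succ_cubic_lattice[OF assms(1,2)]
    by (simp_all add: a_def)
  have unique_fine: "\<exists>!y. y \<in> fine_grid \<and> p \<in> vor fine_grid y"
    and unique_coarse: "\<exists>!y. y \<in> coarse_grid \<and> p \<in> vor coarse_grid y" if "p \<in> P" for p
    using assms(4) that unfolding fine[symmetric] coarse[symmetric] by blast+
  define V where "V = nearest fine_grid ` P"
  have "V \<subseteq> fine_grid"
    unfolding V_def using unique_fine nearest_mem by blast
  moreover have "nearest coarse_grid ` P = snap ` V"
    unfolding V_def image_image
    by (intro image_cong refl nearest_coarse_eq_snap_nearest_fine unique_fine unique_coarse)
  moreover have "spanned fine_grid a V f"
    using assms(5) unfolding active_face_def V_def fine a_def .
  ultimately show ?thesis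
    unfolding active_face_def fine coarse alpha_succ a_def[symmetric] by (simp add: spanned_gface)
qed

end
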